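(* Let $r\ge1$ be an integer, $d=2r-1$, $\beta>0$, and let $Q$ be a complex polynomial of degree $r$ with $Q(0)=0$. Define $a_i,b_i$ ($0\le i\le d$) by $1-2Q'(x)=\sum_{i=0}^d a_ix^i$ and $x\big(Q'(x)^2-Q'(x)-Q''(x)\big)=\sum_{i=0}^d b_ix^i$, and for $0\le i\le\min(n,d)$ put $\gamma_{ni}=\big(a_i(n-i+\frac\beta2)+b_i\big)\sqrt{\frac{n!(\beta)_n}{(n-i)!(\beta)_{n-i}}}$. Let $P_0=1$, $P_n=0$ for $n<0$, and $$\Big(x+\frac{\beta}{2}\Big)P_n(x)=\sqrt{(n+1)(n+\beta)}\,P_{n+1}(x)+\sum_{i=0}^{\min(n,d)}\gamma_{ni}P_{n-i}(x),\qquad n\ge0,$$ and set $\widehat P_n(x)=\sqrt{n!(\beta)_n}\,P_n(x)$. Then $$\sum_{n=0}^\infty\frac{\widehat P_n(x)}{n!(\beta)_n}z^n=e^{Q(z)}\,{}_1F_1\left(\begin{matrix}-x\\ \beta\end{matrix};-z\right).$$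
   Context: $(a)_n=a(a+1)\cdots(a+n-1)$, $(a)_0=1$; ${}_1F_1\left(\begin{matrix}a\\ b\end{matrix};x\right)=\sum_{m\ge0}\frac{(a)_m}{(b)_m}\frac{x^m}{m!}$. *)

theory Defs
  imports "HOL-Analysis.Analysis" "HOL-Computational_Algebra.Polynomial"
begin

definition hyp1F1 :: "complex \<Rightarrow> complex \<Rightarrow> complex \<Rightarrow> complex" where
  "hyp1F1 a b w = (\<Sum>m. pochhammer a m / pochhammer b m * w ^ m / of_nat (fact m))"

end

theory Submission
  imports Defs "HOL-Complex_Analysis.Complex_Analysis"
begin

text \<open>
  Put \<open>u\<^sub>n = P\<^sub>n(x) / sqrt (n! (\<beta>)\<^sub>n)\<close>, so that the series in question is \<open>\<Sum> u\<^sub>n z\<^sup>n\<close>.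
  Dividing the recurrence by \<open>sqrt (n! (\<beta>)\<^sub>n)\<close> turns it into
  \<open>(x + \<beta>/2) u\<^sub>n = (n+1)(n+\<beta>) u\<^sub>n\<^sub>+\<^sub>1 + \<Sum>\<^sub>i (a\<^sub>i (n - i + \<beta>/2) + b\<^sub>i) u\<^sub>n\<^sub>-\<^sub>i\<close>.
  On the other side, \<open>M(z) = 1F1(-x; \<beta>; -z)\<close> solves Kummer's equation
  \<open>z M'' + (\<beta> + z) M' = x M\<close>, and since \<open>E = exp Q\<close> satisfies \<open>E' = Q' E\<close>, the entire function
  \<open>F = E M\<close> satisfies \<open>(x + \<beta>/2) F = z F'' + \<beta> F' + A z F' + (\<beta>/2) A F + B F\<close> with
  \<open>A = 1 - 2Q'\<close> and \<open>B = z (Q'\<^sup>2 - Q' - Q'')\<close>, polynomials of degree at most \<open>2r - 1\<close>.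
  Comparing coefficients, the Taylor coefficients of \<open>F\<close> obey the same recurrence; its leading
  coefficient \<open>(n+1)(n+\<beta>)\<close> never vanishes and \<open>u\<^sub>0 = F\<^sub>0 = 1\<close>, so they are the \<open>u\<^sub>n\<close>, and
  the Taylor series of the entire function \<open>F\<close> converges to \<open>F(z)\<close> everywhere.
\<close>

definition hyp1F1_neg_fps :: "complex \<Rightarrow> complex \<Rightarrow> complex fps" where
  "hyp1F1_neg_fps a b = Abs_fps (\<lambda>n. (- 1) ^ n * pochhammer a n / (pochhammer b n * fact n))"

lemma eval_hyp1F1_neg_fps: "eval_fps (hyp1F1_neg_fps a b) z = hyp1F1 a b (- z)"
  unfolding eval_fps_def hyp1F1_def hyp1F1_neg_fps_def
  by (simp add: power_minus[of z] mult_ac)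

lemma hyp1F1_neg_fps_nth_Suc:
  assumes "b \<notin> \<int>\<^sub>\<le>\<^sub>0"
  shows "of_nat (Suc n) * (of_nat n + b) * hyp1F1_neg_fps a b $ Suc n
           = - (a + of_nat n) * hyp1F1_neg_fps a b $ n"
proof -
  have "pochhammer b n \<noteq> 0" "b + of_nat n \<noteq> 0"
    using assms by (auto dest: pochhammer_eq_0_imp_nonpos_Int plus_of_nat_eq_0_imp)
  then show ?thesis
    by (simp add: hyp1F1_neg_fps_def pochhammer_Suc fact_Suc add.commute[of "of_nat n"] del: of_nat_Suc)
       (simp add: field_simps)
qed

lemma summable_hyp1F1_neg_fps:
  assumes b: "b \<notin> \<int>\<^sub>\<le>\<^sub>0"
  shows "summable (\<lambda>n. hyp1F1_neg_fps a b $ n * z ^ n)"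
proof (rule summable_ratio_test)
  define N where "N = nat \<lceil>2 * norm b + norm a + 8 * norm z\<rceil>"
  fix n assume "n \<ge> N"
  then have "2 * norm b + norm a + 8 * norm z \<le> real n"
    unfolding N_def by (simp add: nat_ceiling_le_eq)
  then have n: "2 * norm b \<le> real n" "norm a \<le> real n" "8 * norm z \<le> real n + 1"
    using norm_ge_zero[of a] norm_ge_zero[of b] norm_ge_zero[of z] by linarith+
  let ?u = "fps_nth (hyp1F1_neg_fps a b)"
  define K where "K = (real n + 1) * norm (of_nat n + b)"
  have "norm (of_nat n + b) \<ge> real n / 2"
    using norm_triangle_ineq2[of "of_nat n" "- b"] n(1) by (simp add: add.commute)
  then have K_ge: "K \<ge> (real n + 1) * real n / 2"
    unfolding K_def by (simp add: mult_left_mono)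
  have "of_nat n + b \<noteq> 0"
    using b by (auto dest: plus_of_nat_eq_0_imp simp: add.commute)
  then have K_pos: "K > 0" unfolding K_def by simp
  have "norm (a + of_nat n) * norm z \<le> 2 * real n * norm z"
    using norm_triangle_ineq[of a "of_nat n"] n(2) by (intro mult_right_mono) auto
  also have "\<dots> \<le> (real n + 1) * real n / 4"
    using n(3) mult_right_mono[OF n(3), of "real n"] by (simp add: algebra_simps)
  also have "\<dots> \<le> K / 2" using K_ge by linarith
  finally have ratio: "norm (a + of_nat n) * norm z \<le> K / 2" .
  have "K * norm (?u (Suc n)) = norm (a + of_nat n) * norm (?u n)"
    using arg_cong[OF hyp1F1_neg_fps_nth_Suc[OF b, of n a], of norm]
    unfolding K_def norm_mult norm_minus_cancel norm_of_nat by (simp add: add.commute)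
  then have "K * norm (?u (Suc n) * z ^ Suc n) = norm (a + of_nat n) * norm z * norm (?u n * z ^ n)"
    by (simp add: norm_mult norm_power mult_ac)
  also have "\<dots> \<le> K / 2 * norm (?u n * z ^ n)"
    using ratio by (rule mult_right_mono) simp
  finally show "norm (?u (Suc n) * z ^ Suc n) \<le> 1 / 2 * norm (?u n * z ^ n)"
    using K_pos by (simp add: field_simps)
qed simp

lemma fps_conv_radius_hyp1F1_neg_fps:
  "b \<notin> \<int>\<^sub>\<le>\<^sub>0 \<Longrightarrow> fps_conv_radius (hyp1F1_neg_fps a b) = \<infinity>"
  unfolding fps_conv_radius_def by (rule conv_radius_inftyI'') (rule summable_hyp1F1_neg_fps)

lemma hyp1F1_at_0 [simp]: "hyp1F1 a b 0 = 1"
  using eval_hyp1F1_neg_fps[of a b 0] by (simp add: eval_fps_at_0 hyp1F1_neg_fps_def)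

lemma hyp1F1_neg_eq_eval_fps: "(\<lambda>w. hyp1F1 a b (- w)) = eval_fps (hyp1F1_neg_fps a b)"
  by (simp add: fun_eq_iff eval_hyp1F1_neg_fps)

lemma hyp1F1_neg_has_fps_expansion:
  assumes "b \<notin> \<int>\<^sub>\<le>\<^sub>0"
  shows "(\<lambda>w. hyp1F1 a b (- w)) has_fps_expansion hyp1F1_neg_fps a b"
  unfolding hyp1F1_neg_eq_eval_fps
  by (rule eval_fps_has_fps_expansion) (simp add: fps_conv_radius_hyp1F1_neg_fps assms)

lemma holomorphic_hyp1F1_neg:
  assumes "b \<notin> \<int>\<^sub>\<le>\<^sub>0"
  shows "(\<lambda>w. hyp1F1 a b (- w)) holomorphic_on A"
  unfolding hyp1F1_neg_eq_eval_fps
  by (rule holomorphic_on_eval_fps) (simp add: fps_conv_radius_hyp1F1_neg_fps assms)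

text \<open>Kummer's equation \<open>w u'' + (b - w) u' = a u\<close> for \<open>u = 1F1(a; b; \<cdot>)\<close>, transported by
  \<open>w \<mapsto> -w\<close>.\<close>

lemma hyp1F1_neg_fps_ode:
  fixes a b :: complex
  assumes b: "b \<notin> \<int>\<^sub>\<le>\<^sub>0"
  defines "M \<equiv> hyp1F1_neg_fps a b"
  shows "fps_X * fps_deriv (fps_deriv M) + (fps_const b + fps_X) * fps_deriv M = - fps_const a * M"
proof (rule fps_ext)
  fix n
  have "(fps_X * fps_deriv (fps_deriv M) + (fps_const b + fps_X) * fps_deriv M) $ n
      = of_nat (Suc n) * (of_nat n + b) * M $ Suc n + of_nat n * M $ n"
    by (simp add: fps_mult_fps_X_deriv_shift distrib_right algebra_simps del: of_nat_Suc)
  also have "\<dots> = (- fps_const a * M) $ n"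
    unfolding M_def hyp1F1_neg_fps_nth_Suc[OF b] by (simp add: algebra_simps)
  finally show "(fps_X * fps_deriv (fps_deriv M) + (fps_const b + fps_X) * fps_deriv M) $ n
      = (- fps_const a * M) $ n" .
qed

lemma fps_deriv_fps_expansion_exp_poly:
  fixes p :: "complex poly"
  defines "E \<equiv> fps_expansion (\<lambda>w. exp (poly p w)) 0"
  shows "fps_deriv E = fps_of_poly (pderiv p) * E"
proof -
  have E: "(\<lambda>w. exp (poly p w)) has_fps_expansion E"
    unfolding E_def by (rule has_fps_expansion_fps_expansion[of UNIV]) (auto intro!: holomorphic_intros)
  have "deriv (\<lambda>w. exp (poly p w)) = (\<lambda>w. poly (pderiv p) w * exp (poly p w))"
    by (intro ext DERIV_imp_deriv) (auto intro!: derivative_eq_intros poly_DERIV)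
  moreover have "poly (pderiv p) has_fps_expansion fps_of_poly (pderiv p)"
    using eval_fps_has_fps_expansion[of "fps_of_poly (pderiv p)"]
    by (simp add: eval_fps_of_poly[abs_def])
  ultimately have "deriv (\<lambda>w. exp (poly p w)) has_fps_expansion fps_of_poly (pderiv p) * E"
    using E by (simp add: has_fps_expansion_mult)
  with has_fps_expansion_deriv[OF E] show ?thesis
    by (rule fps_expansion_unique_complex)
qed

text \<open>Kummer's operator conjugated by a factor \<open>E\<close> with \<open>E' = q E\<close>; for \<open>E = exp Q\<close> this is the
  differential equation of the generating function in the paper.\<close>

lemma fps_ode_mult_exp:
  fixes E M q :: "'a::field_char_0 fps" and c x :: 'a
  assumes E: "fps_deriv E = q * E"
    and M: "fps_X * fps_deriv (fps_deriv M) + (fps_const c + fps_X) * fps_deriv M = fps_const x * M"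
  defines "F \<equiv> E * M"
  shows "fps_const (x + c/2) * F = fps_X * fps_deriv (fps_deriv F) + fps_const c * fps_deriv F
      + (1 - 2*q) * (fps_X * fps_deriv F) + fps_const (c/2) * ((1 - 2*q) * F)
      + fps_X * (q^2 - q - fps_deriv q) * F"
proof -
  have dF: "fps_deriv F = E * (q * M + fps_deriv M)"
    using E by (simp add: F_def algebra_simps)
  have ddF: "fps_deriv (fps_deriv F)
      = E * ((q^2 + fps_deriv q) * M + 2 * q * fps_deriv M + fps_deriv (fps_deriv M))"
    using E by (simp add: dF algebra_simps power2_eq_square)
  have "fps_const c = 2 * fps_const (c/2)" "fps_const (x + c/2) = fps_const x + fps_const (c/2)"
    by (simp_all add: numeral_fps_const flip: fps_const_mult)
  then show ?thesis
    unfolding ddF unfolding dF unfolding F_def using M by algebra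
qed

lemma fps_ode_nth_recurrence:
  fixes F :: "'a::field_char_0 fps" and A B :: "'a poly"
  assumes ode: "fps_const (x + c/2) * F = fps_X * fps_deriv (fps_deriv F) + fps_const c * fps_deriv F
      + fps_of_poly A * (fps_X * fps_deriv F) + fps_const (c/2) * (fps_of_poly A * F) + fps_of_poly B * F"
    and deg: "degree A \<le> d" "degree B \<le> d"
  shows "(x + c/2) * F $ n = of_nat (Suc n) * (of_nat n + c) * F $ Suc n
      + (\<Sum>i=0..min n d. (coeff A i * (of_nat (n - i) + c/2) + coeff B i) * F $ (n - i))"
proof -
  have "(x + c/2) * F $ n = (fps_const (x + c/2) * F) $ n" by simp
  also have "\<dots> = of_nat n * (of_nat (Suc n) * F $ Suc n) + c * (of_nat (Suc n) * F $ Suc n)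
      + (\<Sum>i=0..n. coeff A i * (of_nat (n - i) * F $ (n - i)))
      + c/2 * (\<Sum>i=0..n. coeff A i * F $ (n - i)) + (\<Sum>i=0..n. coeff B i * F $ (n - i))"
    unfolding ode
    by (simp only: fps_add_nth fps_mult_left_const_nth fps_mult_fps_X_deriv_shift)
       (simp add: fps_mult_nth fps_mult_fps_X_deriv_shift del: of_nat_Suc)
  also have "\<dots> = of_nat (Suc n) * (of_nat n + c) * F $ Suc n
      + (\<Sum>i=0..n. (coeff A i * (of_nat (n - i) + c/2) + coeff B i) * F $ (n - i))"
    by (simp add: sum_distrib_left sum.distrib[symmetric] algebra_simps del: of_nat_Suc)
  also have "(\<Sum>i=0..n. (coeff A i * (of_nat (n - i) + c/2) + coeff B i) * F $ (n - i))
      = (\<Sum>i=0..min n d. (coeff A i * (of_nat (n - i) + c/2) + coeff B i) * F $ (n - i))"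
    using deg by (intro sum.mono_neutral_right) (auto simp: coeff_eq_0)
  finally show ?thesis .
qed

lemma degree_exp_poly_ode_coeffs:
  fixes Q :: "'a::field_char_0 poly"
  assumes "degree Q \<le> r" "1 \<le> r"
  shows "degree (1 - smult 2 (pderiv Q)) \<le> 2 * r - 1"
    and "degree ([:0, 1:] * ((pderiv Q)^2 - pderiv Q - pderiv (pderiv Q))) \<le> 2 * r - 1"
proof -
  have Q': "degree (pderiv Q) \<le> r - 1" and Q'': "degree (pderiv (pderiv Q)) \<le> r - 1"
    using assms(1) degree_pderiv[of Q] degree_pderiv[of "pderiv Q"] by linarith+
  show "degree (1 - smult 2 (pderiv Q)) \<le> 2 * r - 1"
    using degree_smult_le[of 2 "pderiv Q"] Q' by (intro degree_diff_le) auto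
  have "degree ((pderiv Q)^2) \<le> 2 * (r - 1)"
    using degree_power_le[of "pderiv Q" 2] Q' by simp
  then have "degree ((pderiv Q)^2 - pderiv Q - pderiv (pderiv Q)) \<le> 2 * (r - 1)"
    using Q' Q'' by (intro degree_diff_le) auto
  then show "degree ([:0, 1:] * ((pderiv Q)^2 - pderiv Q - pderiv (pderiv Q))) \<le> 2 * r - 1"
    using degree_mult_le[of "[:0, 1:]" "(pderiv Q)^2 - pderiv Q - pderiv (pderiv Q)"] assms(2)
    by simp
qed

lemma fps_expansion_exp_poly_hyp1F1_nth_recurrence:
  fixes Q :: "complex poly" and b x :: complex
  assumes b: "b \<notin> \<int>\<^sub>\<le>\<^sub>0" and deg: "degree Q \<le> r" "1 \<le> r"
  defines "F \<equiv> fps_expansion (\<lambda>w. exp (poly Q w) * hyp1F1 (- x) b (- w)) 0"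
  shows "(x + b/2) * F $ n = of_nat (Suc n) * (of_nat n + b) * F $ Suc n
      + (\<Sum>i=0..min n (2 * r - 1). (coeff (1 - smult 2 (pderiv Q)) i * (of_nat (n - i) + b/2)
          + coeff ([:0, 1:] * ((pderiv Q)^2 - pderiv Q - pderiv (pderiv Q))) i) * F $ (n - i))"
proof (rule fps_ode_nth_recurrence[OF _ degree_exp_poly_ode_coeffs[OF deg]])
  define E where "E = fps_expansion (\<lambda>w. exp (poly Q w)) 0"
  define q where "q = fps_of_poly (pderiv Q)"
  have "(\<lambda>w. exp (poly Q w)) has_fps_expansion E"
    unfolding E_def by (rule has_fps_expansion_fps_expansion[of UNIV]) (auto intro!: holomorphic_intros)
  then have F: "F = E * hyp1F1_neg_fps (- x) b"
    unfolding F_def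
    by (intro fps_expansion_eqI has_fps_expansion_mult hyp1F1_neg_has_fps_expansion b)
  have A: "fps_of_poly (1 - smult 2 (pderiv Q)) = 1 - 2 * q"
    by (simp add: q_def fps_of_poly_diff fps_of_poly_smult numeral_fps_const)
  have B: "fps_of_poly ([:0, 1:] * ((pderiv Q)^2 - pderiv Q - pderiv (pderiv Q)))
      = fps_X * (q^2 - q - fps_deriv q)"
    by (simp only: q_def fps_of_poly_mult fps_of_poly_diff fps_of_poly_power fps_of_poly_pderiv
        fps_of_poly_fps_X)
  show "fps_const (x + b/2) * F = fps_X * fps_deriv (fps_deriv F) + fps_const b * fps_deriv F
      + fps_of_poly (1 - smult 2 (pderiv Q)) * (fps_X * fps_deriv F)
      + fps_const (b/2) * (fps_of_poly (1 - smult 2 (pderiv Q)) * F)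
      + fps_of_poly ([:0, 1:] * ((pderiv Q)^2 - pderiv Q - pderiv (pderiv Q))) * F"
    unfolding A B F
  proof (rule fps_ode_mult_exp)
    show "fps_deriv E = q * E"
      unfolding E_def q_def by (rule fps_deriv_fps_expansion_exp_poly)
    show "fps_X * fps_deriv (fps_deriv (hyp1F1_neg_fps (- x) b))
        + (fps_const b + fps_X) * fps_deriv (hyp1F1_neg_fps (- x) b)
        = fps_const x * hyp1F1_neg_fps (- x) b"
      using hyp1F1_neg_fps_ode[OF b, of "- x"] by simp
  qed
qed

lemma sums_fps_expansion_exp_poly_hyp1F1:
  fixes Q :: "complex poly"
  assumes "b \<notin> \<int>\<^sub>\<le>\<^sub>0"
  shows "(\<lambda>n. fps_expansion (\<lambda>w. exp (poly Q w) * hyp1F1 (- x) b (- w)) 0 $ n * z ^ n)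
      sums (exp (poly Q z) * hyp1F1 (- x) b (- z))"
proof (rule has_fps_expansion_imp_sums_complex[where r = \<infinity>])
  show "(\<lambda>w. exp (poly Q w) * hyp1F1 (- x) b (- w)) holomorphic_on eball 0 \<infinity>"
    using holomorphic_hyp1F1_neg[OF assms] by (auto intro!: holomorphic_intros)
  then show "(\<lambda>w. exp (poly Q w) * hyp1F1 (- x) b (- w))
      has_fps_expansion fps_expansion (\<lambda>w. exp (poly Q w) * hyp1F1 (- x) b (- w)) 0"
    by (intro has_fps_expansion_fps_expansion[of UNIV]) auto
qed simp

lemma recurrence_solution_unique:
  fixes u v :: "nat \<Rightarrow> 'a::idom"
  assumes "u 0 = v 0" and K: "\<And>n. K n \<noteq> 0"
    and u: "\<And>n. c * u n = K n * u (Suc n) + (\<Sum>i=0..min n d. w n i * u (n - i))"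
    and v: "\<And>n. c * v n = K n * v (Suc n) + (\<Sum>i=0..min n d. w n i * v (n - i))"
  shows "u = v"
proof -
  have "\<forall>m\<le>n. u m = v m" for n
  proof (induction n)
    case 0
    then show ?case using assms(1) by simp
  next
    case (Suc n)
    then have tail: "(\<Sum>i=0..min n d. w n i * u (n - i)) = (\<Sum>i=0..min n d. w n i * v (n - i))"
      by (intro sum.cong) auto
    have "K n * u (Suc n) = c * u n - (\<Sum>i=0..min n d. w n i * u (n - i))"
      using u[of n] by (simp add: eq_diff_eq)
    also have "\<dots> = c * v n - (\<Sum>i=0..min n d. w n i * v (n - i))"
      using Suc.IH tail by simp
    also have "\<dots> = K n * v (Suc n)"
      using v[of n] by (simp add: eq_diff_eq)
    finally have "K n * u (Suc n) = K n * v (Suc n)" .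
    with K[of n] have "u (Suc n) = v (Suc n)" by simp
    with Suc.IH show ?case by (auto simp: le_Suc_eq)
  qed
  then show ?thesis by auto
qed

text \<open>The paper's normalised polynomials \<open>P-hat\<^sub>n\<close> are \<open>hat_factor \<beta> n * P\<^sub>n\<close>.\<close>

definition hat_factor :: "real \<Rightarrow> nat \<Rightarrow> real" where
  "hat_factor \<beta> n = sqrt (fact n * pochhammer \<beta> n)"

lemma hat_factor_pos: "\<beta> > 0 \<Longrightarrow> hat_factor \<beta> n > 0"
  by (simp add: hat_factor_def pochhammer_pos)

lemma hat_factor_Suc: "hat_factor \<beta> (Suc n) = sqrt ((real n + 1) * (real n + \<beta>)) * hat_factor \<beta> n"
proof -
  have "fact (Suc n) * pochhammer \<beta> (Suc n) = (real n + 1) * (real n + \<beta>) * (fact n * pochhammer \<beta> n)"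
    by (simp add: pochhammer_Suc algebra_simps)
  then show ?thesis
    unfolding hat_factor_def by (simp only: real_sqrt_mult)
qed

lemma rescaled_recurrence:
  fixes P :: "nat \<Rightarrow> complex" and w :: "nat \<Rightarrow> nat \<Rightarrow> complex"
  assumes \<beta>: "\<beta> > 0"
    and rec: "c * P n = of_real (sqrt ((real n + 1) * (real n + \<beta>))) * P (Suc n)
        + (\<Sum>i=0..min n d. w n i * of_real (hat_factor \<beta> n / hat_factor \<beta> (n - i)) * P (n - i))"
  defines "u \<equiv> \<lambda>m. P m / of_real (hat_factor \<beta> m)"
  shows "c * u n = of_nat (Suc n) * (of_nat n + of_real \<beta>) * u (Suc n)
      + (\<Sum>i=0..min n d. w n i * u (n - i))"
proof -
  let ?s = "\<lambda>m. complex_of_real (hat_factor \<beta> m)"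
  have s_nz: "?s m \<noteq> 0" for m
    using hat_factor_pos[OF \<beta>, of m] by simp
  have P: "P m = ?s m * u m" for m
    using s_nz[of m] by (simp add: u_def)
  have "sqrt ((real n + 1) * (real n + \<beta>)) * hat_factor \<beta> (Suc n)
      = hat_factor \<beta> n * ((real n + 1) * (real n + \<beta>))"
    using \<beta> unfolding hat_factor_Suc mult.assoc[symmetric] real_sqrt_mult_self by simp
  then have lead: "of_real (sqrt ((real n + 1) * (real n + \<beta>))) * ?s (Suc n)
      = ?s n * (of_nat (Suc n) * (of_nat n + of_real \<beta>))"
    unfolding of_real_mult[symmetric] by simp
  have tail: "of_real (hat_factor \<beta> n / hat_factor \<beta> (n - i)) * ?s (n - i) = ?s n" for i
    using s_nz[of "n - i"] by (simp add: of_real_divide)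
  have "?s n * (c * u n) = c * P n"
    by (simp add: P)
  also have "\<dots> = of_real (sqrt ((real n + 1) * (real n + \<beta>))) * ?s (Suc n) * u (Suc n)
      + (\<Sum>i=0..min n d. w n i * (of_real (hat_factor \<beta> n / hat_factor \<beta> (n - i)) * ?s (n - i))
          * u (n - i))"
    unfolding rec by (simp only: P mult.assoc)
  also have "\<dots> = ?s n * (of_nat (Suc n) * (of_nat n + of_real \<beta>) * u (Suc n)
      + (\<Sum>i=0..min n d. w n i * u (n - i)))"
    unfolding lead tail by (simp add: sum_distrib_left distrib_left mult_ac)
  finally show ?thesis
    using s_nz[of n] by simp
qed

theorem mainTheorem3:
  fixes r :: nat and \<beta> :: real and Q :: "complex poly"
    and P :: "nat \<Rightarrow> complex \<Rightarrow> complex"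
    and a b :: "nat \<Rightarrow> complex" and \<gamma> :: "nat \<Rightarrow> nat \<Rightarrow> complex"
    and x z :: complex
  assumes r: "r \<ge> 1"
    and \<beta>: "\<beta> > 0"
    and degQ: "degree Q = r"
    and Q0: "poly Q 0 = 0"
    and a_def: "\<And>i. a i = coeff (1 - smult 2 (pderiv Q)) i"
    and b_def: "\<And>i. b i = coeff ([:0, 1:] * ((pderiv Q)^2 - pderiv Q - pderiv (pderiv Q))) i"
    and \<gamma>_def: "\<And>n i. \<gamma> n i = (a i * (of_nat (n - i) + of_real (\<beta> / 2)) + b i) *
        of_real (sqrt (fact n * pochhammer \<beta> n / (fact (n - i) * pochhammer \<beta> (n - i))))"
    and P0: "\<And>y. P 0 y = 1"
    and Prec: "\<And>n y. (y + of_real (\<beta> / 2)) * P n y =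
        of_real (sqrt ((real n + 1) * (real n + \<beta>))) * P (Suc n) y
        + (\<Sum>i = 0..min n (2 * r - 1). \<gamma> n i * P (n - i) y)"
  shows "(\<lambda>n. of_real (sqrt (fact n * pochhammer \<beta> n)) * P n x
              / of_real (fact n * pochhammer \<beta> n) * z ^ n)
         sums (exp (poly Q z) * hyp1F1 (- x) (of_real \<beta>) (- z))"
proof -
  define u where "u n = P n x / of_real (hat_factor \<beta> n)" for n
  define F where "F = fps_expansion (\<lambda>w. exp (poly Q w) * hyp1F1 (- x) (of_real \<beta>) (- w)) 0"
  define K :: "nat \<Rightarrow> complex" where "K n = of_nat (Suc n) * (of_nat n + of_real \<beta>)" for n
  define w where "w n i = a i * (of_nat (n - i) + of_real \<beta> / 2) + b i" for n i
  have \<beta>': "complex_of_real \<beta> \<notin> \<int>\<^sub>\<le>\<^sub>0"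
    using \<beta> by (auto simp: of_real_in_nonpos_Ints_iff dest: nonpos_Ints_nonpos)
  have rec_u: "(x + of_real \<beta> / 2) * u n = K n * u (Suc n) + (\<Sum>i=0..min n (2*r-1). w n i * u (n - i))"
    for n
    unfolding u_def K_def using Prec[of x n]
    by (intro rescaled_recurrence[OF \<beta>, where P = "\<lambda>m. P m x"])
       (simp add: \<gamma>_def w_def hat_factor_def real_sqrt_divide)
  have rec_F: "(x + of_real \<beta> / 2) * F $ n = K n * F $ Suc n + (\<Sum>i=0..min n (2*r-1). w n i * F $ (n - i))"
    for n
    using fps_expansion_exp_poly_hyp1F1_nth_recurrence[OF \<beta>' _ r, of Q x n] degQ
    by (simp add: F_def K_def w_def a_def b_def)
  have "u = fps_nth F"
  proof (rule recurrence_solution_unique[OF _ _ rec_u rec_F])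
    show "u 0 = F $ 0"
      using P0 Q0 by (simp add: u_def F_def fps_expansion_def hat_factor_def)
    show "K n \<noteq> 0" for n
      using \<beta>' plus_of_nat_eq_0_imp[of "of_real \<beta>" n]
      by (auto simp: K_def add.commute simp del: of_nat_Suc)
  qed
  moreover have "(\<lambda>n. F $ n * z ^ n) sums (exp (poly Q z) * hyp1F1 (- x) (of_real \<beta>) (- z))"
    unfolding F_def by (rule sums_fps_expansion_exp_poly_hyp1F1[OF \<beta>'])
  moreover have "of_real (sqrt (fact n * pochhammer \<beta> n)) * P n x / of_real (fact n * pochhammer \<beta> n)
      = u n" for n
  proof -
    have "fact n * pochhammer \<beta> n = hat_factor \<beta> n * hat_factor \<beta> n"
      using \<beta> by (simp add: hat_factor_def pochhammer_pos less_imp_le)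
    then show ?thesis
      using hat_factor_pos[OF \<beta>, of n] by (simp add: u_def flip: hat_factor_def)
  qed
  ultimately show ?thesis by simp
qed
end
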